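(* Let $X$ be a real Banach space. If $X$ is fully Mazur (respectively, fully Mackey complete), then every closed linear subspace of $X$ is fully Mazur (respectively, fully Mackey complete).
   Context: A linear subspace $Y\subset X^*$ is norming if $|||x|||=\sup\{x^*(x): x^*\in Y,\ \|x^*\|\le 1\}$ defines an equivalent norm on $X$. $X$ is fully Mazur if for every norming and norm-closed subspace $Y\subset X^*$, every $w^*$-sequentially continuous linear functional $Y\to\mathbb{R}$ is $w^*$-continuous. $X$ is fully Mackey complete if $(X,\mu(X,Y))$ is complete for every norming and norm-closed subspace $Y\subset X^*$, where $\mu(X,Y)$ is the locally convex topology on $X$ of uniform convergence on absolutely convex $w^*$-compact subsets of $Y$. *)

theory Defs
  imports "HOL-Analysis.Analysis"
begin

text \<open>Throughout, X is a real Banach space (type 'a::banach) and S \<subseteq> X a closed linear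
subspace, regarded as a Banach space in its own right.  Functionals on S are represented
as functions 'a \<Rightarrow> real vanishing outside S.  The type 'a \<Rightarrow> real carries the product
(pointwise) topology, so the subspace topology on a set of such functionals is the
weak-star topology (evaluation at points outside S is constantly 0).\<close>

definition dual_sp :: "'a::real_normed_vector set \<Rightarrow> ('a \<Rightarrow> real) set" where
  "dual_sp S = {f. (\<forall>x\<in>S. \<forall>y\<in>S. f (x + y) = f x + f y) \<and>
                   (\<forall>c. \<forall>x\<in>S. f (c *\<^sub>R x) = c * f x) \<and>
                   (\<exists>K. \<forall>x\<in>S. \<bar>f x\<bar> \<le> K * norm x) \<and>
                   (\<forall>x. x \<notin> S \<longrightarrow> f x = 0)}"

definition dnorm :: "'a::real_normed_vector set \<Rightarrow> ('a \<Rightarrow> real) \<Rightarrow> real" where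
  "dnorm S f = Sup {\<bar>f x\<bar> | x. x \<in> S \<and> norm x \<le> 1}"

definition dual_subspace :: "'a::real_normed_vector set \<Rightarrow> ('a \<Rightarrow> real) set \<Rightarrow> bool" where
  "dual_subspace S Y \<longleftrightarrow> Y \<subseteq> dual_sp S \<and> (\<lambda>x. 0) \<in> Y \<and>
     (\<forall>f\<in>Y. \<forall>g\<in>Y. (\<lambda>x. f x + g x) \<in> Y) \<and> (\<forall>c. \<forall>f\<in>Y. (\<lambda>x. c * f x) \<in> Y)"

definition norm_closed :: "'a::real_normed_vector set \<Rightarrow> ('a \<Rightarrow> real) set \<Rightarrow> bool" where
  "norm_closed S Y \<longleftrightarrow>
     (\<forall>g\<in>dual_sp S. (\<forall>e>0. \<exists>f\<in>Y. dnorm S (\<lambda>x. f x - g x) < e) \<longrightarrow> g \<in> Y)"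

definition Ynorm :: "'a::real_normed_vector set \<Rightarrow> ('a \<Rightarrow> real) set \<Rightarrow> 'a \<Rightarrow> real" where
  "Ynorm S Y x = Sup {f x | f. f \<in> Y \<and> dnorm S f \<le> 1}"

definition norming :: "'a::real_normed_vector set \<Rightarrow> ('a \<Rightarrow> real) set \<Rightarrow> bool" where
  "norming S Y \<longleftrightarrow> (\<exists>c>0. \<exists>C>0. \<forall>x\<in>S. c * norm x \<le> Ynorm S Y x \<and> Ynorm S Y x \<le> C * norm x)"

definition fully_Mazur :: "'a::real_normed_vector set \<Rightarrow> bool" where
  "fully_Mazur S \<longleftrightarrow>
     (\<forall>Y. dual_subspace S Y \<and> norming S Y \<and> norm_closed S Y \<longrightarrow>
        (\<forall>\<phi> :: ('a \<Rightarrow> real) \<Rightarrow> real.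
            (\<forall>f\<in>Y. \<forall>g\<in>Y. \<phi> (\<lambda>x. f x + g x) = \<phi> f + \<phi> g) \<and>
            (\<forall>c. \<forall>f\<in>Y. \<phi> (\<lambda>x. c * f x) = c * \<phi> f) \<and>
            (\<forall>F f. (\<forall>n. F n \<in> Y) \<and> f \<in> Y \<and> F \<longlonglongrightarrow> f \<longrightarrow> (\<lambda>n. \<phi> (F n)) \<longlonglongrightarrow> \<phi> f)
            \<longrightarrow> continuous_on Y \<phi>))"

text \<open>Absolutely convex weak-star compact subsets of Y (these define the Mackey topology).\<close>
definition mackey_sets :: "('a \<Rightarrow> real) set \<Rightarrow> ('a \<Rightarrow> real) set set" where
  "mackey_sets Y = {K. K \<subseteq> Y \<and> compact K \<and>
      (\<forall>f\<in>K. \<forall>g\<in>K. \<forall>a b. \<bar>a\<bar> + \<bar>b\<bar> \<le> 1 \<longrightarrow> (\<lambda>x. a * f x + b * g x) \<in> K)}"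

text \<open>Completeness of (S, mu(S,Y)): every Cauchy filter on S converges (uniform structure of
uniform convergence on the sets in mackey_sets Y).\<close>
definition mackey_complete :: "'a::real_normed_vector set \<Rightarrow> ('a \<Rightarrow> real) set \<Rightarrow> bool" where
  "mackey_complete S Y \<longleftrightarrow>
     (\<forall>F :: 'a filter. F \<noteq> bot \<and> eventually (\<lambda>x. x \<in> S) F \<and>
        (\<forall>K\<in>mackey_sets Y. \<forall>e>0.
            eventually (\<lambda>(x, y). \<forall>f\<in>K. \<bar>f x - f y\<bar> \<le> e) (F \<times>\<^sub>F F))
        \<longrightarrow> (\<exists>z\<in>S. \<forall>K\<in>mackey_sets Y. \<forall>e>0.
                 eventually (\<lambda>x. \<forall>f\<in>K. \<bar>f x - f z\<bar> \<le> e) F))"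

definition fully_Mackey_complete :: "'a::real_normed_vector set \<Rightarrow> bool" where
  "fully_Mackey_complete S \<longleftrightarrow>
     (\<forall>Y. dual_subspace S Y \<and> norming S Y \<and> norm_closed S Y \<longrightarrow> mackey_complete S Y)"

end

theory Submission
  imports Defs
begin

(*
  Let S be a closed subspace of X and Y a norming, norm-closed subspace of S*.  Its preimage
  Z = {g in X*. g|S in Y} under restriction is again norming and norm-closed: by Hahn-Banach,
  restriction maps Z onto Y without increasing norms, and Z contains the distance functionals
  of S, which control the norm of x in terms of its distance to S.

  Mazur: a w*-sequentially continuous linear functional phi on Y pulls back to phi o restriction
  on Z, which is w*-continuous because X is fully Mazur.  A w*-continuous linear functional
  depends on finitely many coordinates only, hence is the evaluation at some point x0 of X.
  A distance functional shows that x0 lies in S, so phi is the evaluation at x0.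

  Mackey: restriction maps absolutely convex w*-compact subsets of Z to such subsets of Y, so a
  mu(S,Y)-Cauchy filter on S is mu(X,Z)-Cauchy and has a mu(X,Z)-limit z, which lies in S by
  the same separation argument.  By Banach-Steinhaus every absolutely convex w*-compact subset of
  Y is norm bounded, hence the restriction of an absolutely convex w*-compact subset of Z; so z
  is also the mu(S,Y)-limit.
*)

section \<open>Hahn--Banach extension of bounded graphs\<close>

lemma subspace_Union_chain:
  assumes "C \<noteq> {}" and "\<And>G. G \<in> C \<Longrightarrow> subspace G" and "\<forall>A\<in>C. \<forall>B\<in>C. A \<subseteq> B \<or> B \<subseteq> A"
  shows "subspace (\<Union>C)"
  unfolding subspace_def
proof (intro conjI ballI allI)
  show "0 \<in> \<Union>C"
    using assms(1,2) subspace_0 by blast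
  show "x + y \<in> \<Union>C" if x: "x \<in> \<Union>C" and y: "y \<in> \<Union>C" for x y
  proof -
    obtain G H where "G \<in> C" "H \<in> C" "x \<in> G" "y \<in> H"
      using x y by blast
    then show ?thesis
      using assms(2,3) subspace_add by (metis UnionI subset_iff)
  qed
  show "c *\<^sub>R x \<in> \<Union>C" if "x \<in> \<Union>C" for c x
    using that assms(2) subspace_scale by blast
qed

lemma graph_extension_value:
  fixes G :: "('a::real_normed_vector \<times> real) set"
  assumes G: "subspace G" and B: "B \<ge> 0" and bound: "\<forall>(x, y)\<in>G. \<bar>y\<bar> \<le> B * norm x"
  shows "\<exists>\<alpha>. \<forall>(x, y)\<in>G. \<bar>y + \<alpha>\<bar> \<le> B * norm (x + x0)"
proof -
  define L where "L = {- y - B * norm (x + x0) | x y. (x, y) \<in> G}"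
  have below: "- y - B * norm (x + x0) \<le> B * norm (x' + x0) - y'"
    if "(x, y) \<in> G" "(x', y') \<in> G" for x y x' y'
  proof -
    have "(x' - x, y' - y) \<in> G"
      using subspace_diff[OF G that(2,1)] by simp
    then have "y' - y \<le> B * norm ((x' + x0) - (x + x0))"
      using bound by auto
    also have "\<dots> \<le> B * (norm (x' + x0) + norm (x + x0))"
      using B norm_triangle_ineq4 mult_left_mono by blast
    finally show ?thesis
      by (simp add: algebra_simps)
  qed
  have zero: "(0, 0) \<in> G"
    using subspace_0[OF G] by (simp add: zero_prod_def)
  have "bdd_above L"
    unfolding bdd_above_def L_def using below[OF _ zero] by blast
  moreover have "L \<noteq> {}"
    unfolding L_def using zero by blast
  ultimately have "l \<le> Sup L" "Sup L \<le> B * norm (x + x0) - y"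
    if "l \<in> L" "(x, y) \<in> G" for l x y
    using that below by (auto intro!: cSup_upper cSup_least simp: L_def)
  then have "\<bar>y + Sup L\<bar> \<le> B * norm (x + x0)" if "(x, y) \<in> G" for x y
    using that by (fastforce simp: L_def abs_le_iff)
  then show ?thesis
    by blast
qed

lemma sum_mem_span_singleton: "p \<in> A \<Longrightarrow> p + t *\<^sub>R v \<in> {p + q | p q. p \<in> A \<and> q \<in> span {v}}"
  unfolding span_singleton by blast

lemma graph_extension_bound:
  fixes G :: "('a::real_normed_vector \<times> real) set"
  assumes G: "subspace G" and bound: "\<forall>(x, y)\<in>G. \<bar>y\<bar> \<le> B * norm x"
    and \<alpha>: "\<forall>(x, y)\<in>G. \<bar>y + \<alpha>\<bar> \<le> B * norm (x + x0)" and xy: "(x, y) \<in> G"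
  shows "\<bar>y + t * \<alpha>\<bar> \<le> B * norm (x + t *\<^sub>R x0)"
proof (cases "t = 0")
  case True
  then show ?thesis
    using bound xy by auto
next
  case False
  have "\<bar>y / t + \<alpha>\<bar> \<le> B * norm (x /\<^sub>R t + x0)"
    using \<alpha> subspace_scale[OF G xy, of "inverse t"] by (auto simp: divide_inverse_commute)
  then have "\<bar>t\<bar> * \<bar>y / t + \<alpha>\<bar> \<le> B * (\<bar>t\<bar> * norm (x /\<^sub>R t + x0))"
    using mult_left_mono[OF _ abs_ge_zero] by (metis mult.left_commute)
  also have "\<bar>t\<bar> * norm (x /\<^sub>R t + x0) = norm (x + t *\<^sub>R x0)"
    using False by (simp flip: norm_scaleR add: scaleR_add_right)
  finally show ?thesis
    using False by (simp add: abs_mult [symmetric] distrib_left)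
qed

lemma graph_extension_step:
  fixes G :: "('a::real_normed_vector \<times> real) set"
  assumes G: "subspace G" and B: "B \<ge> 0" and bound: "\<forall>(x, y)\<in>G. \<bar>y\<bar> \<le> B * norm x"
    and x0: "x0 \<notin> fst ` G"
  shows "\<exists>G'. subspace G' \<and> (\<forall>(x, y)\<in>G'. \<bar>y\<bar> \<le> B * norm x) \<and> G \<subset> G'"
proof -
  obtain \<alpha> where \<alpha>: "\<forall>(x, y)\<in>G. \<bar>y + \<alpha>\<bar> \<le> B * norm (x + x0)"
    using graph_extension_value[OF G B bound] by blast
  define G' where "G' = {p + q | p q. p \<in> G \<and> q \<in> span {(x0, \<alpha>)}}"
  have "subspace G'"
    unfolding G'_def by (intro subspace_sums G subspace_span)
  moreover have "\<forall>(x', y')\<in>G'. \<bar>y'\<bar> \<le> B * norm x'"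
    using graph_extension_bound[OF G bound \<alpha>] unfolding G'_def span_singleton by clarsimp
  moreover have "G \<subseteq> G'"
    using sum_mem_span_singleton[of _ G 0 "(x0, \<alpha>)"] unfolding G'_def by auto
  moreover have "(x0, \<alpha>) \<in> G' - G"
    using sum_mem_span_singleton[OF subspace_0[OF G], of 1 "(x0, \<alpha>)"] x0 unfolding G'_def
    by (auto simp: image_iff)
  ultimately show ?thesis
    by blast
qed

lemma maximal_bounded_graph:
  fixes G0 :: "('a::real_normed_vector \<times> real) set"
  assumes "subspace G0" and B: "B \<ge> 0" and "\<forall>(x, y)\<in>G0. \<bar>y\<bar> \<le> B * norm x"
  shows "\<exists>G. G0 \<subseteq> G \<and> subspace G \<and> (\<forall>(x, y)\<in>G. \<bar>y\<bar> \<le> B * norm x) \<and> fst ` G = UNIV"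
proof -
  define P where "P = {G. G0 \<subseteq> G \<and> subspace G \<and> (\<forall>(x, y)\<in>G. \<bar>y\<bar> \<le> B * norm x)}"
  have nonempty: "P \<noteq> {}"
    using assms unfolding P_def by blast
  have chain: "\<Union>C \<in> P" if C: "C \<noteq> {}" "subset.chain P C" for C
  proof -
    have CP: "C \<subseteq> P" and "\<forall>A\<in>C. \<forall>B\<in>C. A \<subseteq> B \<or> B \<subseteq> A"
      using C(2) unfolding subset.chain_def by auto
    then have "subspace (\<Union>C)"
      using subspace_Union_chain[OF C(1)] unfolding P_def by blast
    moreover have "G0 \<subseteq> \<Union>C" "\<forall>(x, y)\<in>\<Union>C. \<bar>y\<bar> \<le> B * norm x"
      using CP C(1) unfolding P_def by blast+
    ultimately show ?thesis
      unfolding P_def by blast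
  qed
  obtain G where G: "G \<in> P" and max: "\<forall>G'\<in>P. G \<subseteq> G' \<longrightarrow> G' = G"
    using subset_Zorn_nonempty[OF nonempty chain] by blast
  then have sG: "subspace G" and bound: "\<forall>(x, y)\<in>G. \<bar>y\<bar> \<le> B * norm x"
    unfolding P_def by blast+
  have "fst ` G = UNIV"
  proof (rule ccontr)
    assume "fst ` G \<noteq> UNIV"
    then obtain x0 where "x0 \<notin> fst ` G"
      by blast
    then obtain G' where "subspace G'" "\<forall>(x, y)\<in>G'. \<bar>y\<bar> \<le> B * norm x" "G \<subset> G'"
      using graph_extension_step[OF sG B bound] by blast
    moreover from this have "G' \<in> P"
      using G unfolding P_def by blast
    ultimately show False
      using max by blast
  qed
  with G show ?thesis
    unfolding P_def by blast
qed

lemma linear_function_of_total_graph: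
  fixes G :: "('a::real_normed_vector \<times> real) set"
  assumes G: "subspace G" and bound: "\<forall>(x, y)\<in>G. \<bar>y\<bar> \<le> B * norm x" and total: "fst ` G = UNIV"
  shows "\<exists>g. linear g \<and> (\<forall>x. \<bar>g x\<bar> \<le> B * norm x) \<and> (\<forall>(x, y)\<in>G. g x = y)"
proof -
  have unique: "y = z" if "(x, y) \<in> G" "(x, z) \<in> G" for x y z
  proof -
    have "(0, y - z) \<in> G"
      using subspace_diff[OF G that] by simp
    then show ?thesis
      using bound by auto
  qed
  define g where "g x = (THE y. (x, y) \<in> G)" for x
  have graph: "(x, y) \<in> G \<longleftrightarrow> g x = y" for x y
  proof -
    obtain z where z: "(x, z) \<in> G"
      using total by (metis UNIV_I fst_eqD imageE surj_pair)
    then have "g x = z"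
      unfolding g_def using unique by (intro the_equality)
    then show ?thesis
      using z unique by blast
  qed
  have "linear g"
  proof (rule linearI)
    show "g (x + y) = g x + g y" for x y
      using subspace_add[OF G, of "(x, g x)" "(y, g y)"] graph by simp
    show "g (c *\<^sub>R x) = c *\<^sub>R g x" for c x
      using subspace_scale[OF G, of "(x, g x)" c] graph by simp
  qed
  moreover have "\<bar>g x\<bar> \<le> B * norm x" for x
    using bound graph by blast
  ultimately show ?thesis
    using graph by blast
qed

lemma Hahn_Banach_graph:
  fixes G0 :: "('a::real_normed_vector \<times> real) set"
  assumes "subspace G0" and "B \<ge> 0" and "\<forall>(x, y)\<in>G0. \<bar>y\<bar> \<le> B * norm x"
  shows "\<exists>g. linear g \<and> (\<forall>x. \<bar>g x\<bar> \<le> B * norm x) \<and> (\<forall>(x, y)\<in>G0. g x = y)"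
proof -
  obtain G where "G0 \<subseteq> G" and G: "subspace G" "\<forall>(x, y)\<in>G. \<bar>y\<bar> \<le> B * norm x" "fst ` G = UNIV"
    using maximal_bounded_graph[OF assms] by blast
  moreover obtain g where "linear g" "\<forall>x. \<bar>g x\<bar> \<le> B * norm x" "\<forall>(x, y)\<in>G. g x = y"
    using linear_function_of_total_graph[OF G] by blast
  ultimately show ?thesis
    by (intro exI[of _ g]) auto
qed

section \<open>Bounded functionals on a subspace\<close>

lemma dual_sp_UNIV_iff: "g \<in> dual_sp UNIV \<longleftrightarrow> linear g \<and> (\<exists>K. \<forall>x. \<bar>g x\<bar> \<le> K * norm x)"
  unfolding dual_sp_def linear_iff by simp

lemma dual_spD:
  assumes "f \<in> dual_sp S"
  shows "\<And>x y. x \<in> S \<Longrightarrow> y \<in> S \<Longrightarrow> f (x + y) = f x + f y"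
    and "\<And>c x. x \<in> S \<Longrightarrow> f (c *\<^sub>R x) = c * f x"
    and "\<exists>K. \<forall>x\<in>S. \<bar>f x\<bar> \<le> K * norm x"
    and "\<And>x. x \<notin> S \<Longrightarrow> f x = 0"
  using assms by (auto simp: dual_sp_def)

lemma dual_sp_apply_0: "subspace S \<Longrightarrow> f \<in> dual_sp S \<Longrightarrow> f 0 = 0"
  using dual_spD(2)[of f S 0 0] by (simp add: subspace_0)

lemma dual_sp_zero: "(\<lambda>x. 0) \<in> dual_sp S"
  unfolding dual_sp_def by (auto intro!: exI[of _ 0])

lemma dual_sp_add:
  assumes f: "f \<in> dual_sp S" and g: "g \<in> dual_sp S"
  shows "(\<lambda>x. f x + g x) \<in> dual_sp S"
proof -
  obtain K L where K: "\<forall>x\<in>S. \<bar>f x\<bar> \<le> K * norm x" and L: "\<forall>x\<in>S. \<bar>g x\<bar> \<le> L * norm x"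
    using dual_spD(3) f g by metis
  have "\<bar>f x + g x\<bar> \<le> (K + L) * norm x" if "x \<in> S" for x
  proof -
    have "\<bar>f x\<bar> \<le> K * norm x" "\<bar>g x\<bar> \<le> L * norm x"
      using K L that by auto
    then show ?thesis
      using abs_triangle_ineq[of "f x" "g x"] unfolding distrib_right by linarith
  qed
  then have "\<exists>M. \<forall>x\<in>S. \<bar>f x + g x\<bar> \<le> M * norm x"
    by blast
  then show ?thesis
    using f g unfolding dual_sp_def by (auto simp: algebra_simps)
qed

lemma dual_sp_scale:
  assumes f: "f \<in> dual_sp S"
  shows "(\<lambda>x. c * f x) \<in> dual_sp S"
proof -
  obtain K where "\<forall>x\<in>S. \<bar>f x\<bar> \<le> K * norm x"
    using dual_spD(3)[OF f] by blast
  then have "\<forall>x\<in>S. \<bar>c * f x\<bar> \<le> (\<bar>c\<bar> * K) * norm x"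
    by (simp add: abs_mult mult.assoc mult_left_mono)
  then have "\<exists>M. \<forall>x\<in>S. \<bar>c * f x\<bar> \<le> M * norm x"
    by blast
  then show ?thesis
    using f unfolding dual_sp_def by (auto simp: algebra_simps)
qed

lemma dual_sp_diff: "f \<in> dual_sp S \<Longrightarrow> g \<in> dual_sp S \<Longrightarrow> (\<lambda>x. f x - g x) \<in> dual_sp S"
  using dual_sp_add[OF _ dual_sp_scale, of f S g "-1"] by simp

lemma dnorm_bdd_above:
  assumes "f \<in> dual_sp S"
  shows "bdd_above {\<bar>f x\<bar> | x. x \<in> S \<and> norm x \<le> 1}"
proof -
  obtain K where K: "\<forall>x\<in>S. \<bar>f x\<bar> \<le> K * norm x"
    using dual_spD(3)[OF assms] by blast
  have "\<bar>f x\<bar> \<le> \<bar>K\<bar>" if "x \<in> S" "norm x \<le> 1" for x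
  proof -
    have "\<bar>f x\<bar> \<le> \<bar>K\<bar> * norm x"
      using K that(1) by (meson abs_ge_self mult_right_mono norm_ge_zero order_trans)
    also have "\<dots> \<le> \<bar>K\<bar>"
      using that(2) by (simp add: mult_left_le)
    finally show ?thesis .
  qed
  then show ?thesis
    unfolding bdd_above_def by blast
qed

lemma dual_sp_abs_le_dnorm:
  assumes f: "f \<in> dual_sp S" and S: "subspace S" and x: "x \<in> S"
  shows "\<bar>f x\<bar> \<le> dnorm S f * norm x"
proof (cases "x = 0")
  case True
  then show ?thesis
    using dual_sp_apply_0[OF S f] by simp
next
  case False
  define u where "u = (1 / norm x) *\<^sub>R x"
  have "u \<in> S" "norm u = 1"
    using S x False by (simp_all add: u_def subspace_scale)
  then have "\<bar>f u\<bar> \<le> dnorm S f"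
    unfolding dnorm_def by (intro cSup_upper dnorm_bdd_above[OF f]) auto
  moreover have "f u = (1 / norm x) * f x"
    using dual_spD(2)[OF f x] by (simp add: u_def)
  ultimately have "\<bar>f x\<bar> / norm x \<le> dnorm S f"
    by simp
  then show ?thesis
    using False by (simp add: divide_le_eq mult.commute)
qed

lemma dnorm_nonneg:
  assumes "f \<in> dual_sp S" "subspace S"
  shows "0 \<le> dnorm S f"
proof -
  have "\<bar>f 0\<bar> \<le> dnorm S f"
    unfolding dnorm_def using assms subspace_0[OF assms(2)] by (intro cSup_upper dnorm_bdd_above) auto
  then show ?thesis
    using dual_sp_apply_0[OF assms(2,1)] by simp
qed

lemma dnorm_leI:
  assumes S: "subspace S" and M: "M \<ge> 0" and bound: "\<forall>x\<in>S. \<bar>f x\<bar> \<le> M * norm x"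
  shows "dnorm S f \<le> M"
  unfolding dnorm_def
proof (rule cSup_least)
  show "{\<bar>f x\<bar> |x. x \<in> S \<and> norm x \<le> 1} \<noteq> {}"
    using subspace_0[OF S] by auto
  fix v
  assume "v \<in> {\<bar>f x\<bar> |x. x \<in> S \<and> norm x \<le> 1}"
  then obtain x where "x \<in> S" "norm x \<le> 1" "v = \<bar>f x\<bar>"
    by blast
  then have "v \<le> M * norm x"
    using bound by auto
  also have "\<dots> \<le> M"
    using M \<open>norm x \<le> 1\<close> by (simp add: mult_left_le)
  finally show "v \<le> M" .
qed

definition restr :: "'a set \<Rightarrow> ('a \<Rightarrow> real) \<Rightarrow> 'a \<Rightarrow> real" where
  "restr S g = (\<lambda>x. if x \<in> S then g x else 0)"

lemma restr_in_dual_sp: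
  assumes S: "subspace S" and g: "g \<in> dual_sp UNIV"
  shows "restr S g \<in> dual_sp S"
proof -
  obtain K where "\<forall>x. \<bar>g x\<bar> \<le> K * norm x"
    using dual_spD(3)[OF g] by blast
  then show ?thesis
    unfolding dual_sp_def restr_def
    using dual_spD(1,2)[OF g] S by (auto simp: subspace_add subspace_scale)
qed

lemma restr_add: "restr S (\<lambda>x. f x + g x) = (\<lambda>x. restr S f x + restr S g x)"
  and restr_scale: "restr S (\<lambda>x. c * f x) = (\<lambda>x. c * restr S f x)"
  and restr_diff: "restr S (\<lambda>x. f x - g x) = (\<lambda>x. restr S f x - restr S g x)"
  and restr_zero: "restr S (\<lambda>x. 0) = (\<lambda>x. 0)"
  by (auto simp: restr_def)

lemma restr_eq_0: "\<forall>x\<in>S. g x = 0 \<Longrightarrow> restr S g = (\<lambda>x. 0)"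
  by (auto simp: restr_def)

lemma dnorm_restr_le:
  assumes S: "subspace S" and g: "g \<in> dual_sp UNIV"
  shows "dnorm S (restr S g) \<le> dnorm UNIV g"
  using dual_sp_abs_le_dnorm[OF g subspace_UNIV] dnorm_nonneg[OF g subspace_UNIV]
  by (intro dnorm_leI[OF S]) (auto simp: restr_def)

lemma continuous_on_restr: "continuous_on A (restr S)"
proof (intro continuous_on_coordinatewise_then_product)
  show "continuous_on A (\<lambda>g. restr S g x)" for x
    by (cases "x \<in> S")
      (auto simp: restr_def intro: continuous_on_subset[OF continuous_on_product_coordinates])
qed

lemma subspace_graph_dual_sp:
  assumes S: "subspace S" and f: "f \<in> dual_sp S"
  shows "subspace ((\<lambda>x. (x, f x)) ` S)"
  unfolding subspace_def
proof (intro conjI ballI allI)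
  show "0 \<in> (\<lambda>x. (x, f x)) ` S"
    using subspace_0[OF S] dual_sp_apply_0[OF S f] by (force simp: zero_prod_def)
  show "p + q \<in> (\<lambda>x. (x, f x)) ` S" if "p \<in> (\<lambda>x. (x, f x)) ` S" "q \<in> (\<lambda>x. (x, f x)) ` S" for p q
    using that subspace_add[OF S] dual_spD(1)[OF f] by force
  show "c *\<^sub>R p \<in> (\<lambda>x. (x, f x)) ` S" if "p \<in> (\<lambda>x. (x, f x)) ` S" for c p
    using that subspace_scale[OF S] dual_spD(2)[OF f] by force
qed

lemma dual_sp_extension:
  assumes S: "subspace S" and f: "f \<in> dual_sp S" and B: "dnorm S f \<le> B"
  shows "\<exists>g\<in>dual_sp UNIV. dnorm UNIV g \<le> B \<and> restr S g = f"
proof -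
  have B0: "B \<ge> 0"
    using dnorm_nonneg[OF f S] B by linarith
  have "\<bar>f x\<bar> \<le> B * norm x" if "x \<in> S" for x
    using dual_sp_abs_le_dnorm[OF f S that] mult_right_mono[OF B norm_ge_zero] by (rule order_trans)
  then have "\<forall>(x, y)\<in>(\<lambda>x. (x, f x)) ` S. \<bar>y\<bar> \<le> B * norm x"
    by blast
  then obtain g where "linear g" and g_bound: "\<forall>x. \<bar>g x\<bar> \<le> B * norm x"
    and g_graph: "\<forall>(x, y)\<in>(\<lambda>x. (x, f x)) ` S. g x = y"
    using Hahn_Banach_graph[OF subspace_graph_dual_sp[OF S f] B0] by blast
  have "g \<in> dual_sp UNIV"
    using \<open>linear g\<close> g_bound dual_sp_UNIV_iff by blast
  moreover have "dnorm UNIV g \<le> B"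
    using dnorm_leI[OF subspace_UNIV B0] g_bound by blast
  moreover have "restr S g = f"
    using g_graph dual_spD(4)[OF f] by (auto simp: restr_def)
  ultimately show ?thesis
    by blast
qed

lemma abs_mult_infdist_le:
  assumes S: "subspace S" and s: "s \<in> S"
  shows "\<bar>t * infdist x0 S\<bar> \<le> norm (s + t *\<^sub>R x0)"
proof (cases "t = 0")
  case False
  have "infdist x0 S \<le> dist x0 (- (1 / t) *\<^sub>R s)"
    using subspace_scale[OF S s] by (rule infdist_le)
  also have "dist x0 (- (1 / t) *\<^sub>R s) = norm ((1 / t) *\<^sub>R (s + t *\<^sub>R x0))"
    using False by (simp add: dist_norm algebra_simps)
  also have "\<dots> = norm (s + t *\<^sub>R x0) / \<bar>t\<bar>"
    by simp
  finally show ?thesis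
    using False infdist_nonneg[of x0 S] by (simp add: abs_mult le_divide_eq mult.commute)
qed simp

lemma distance_functional:
  fixes S :: "'a::real_normed_vector set"
  assumes S: "subspace S"
  shows "\<exists>g\<in>dual_sp UNIV. (\<forall>x\<in>S. g x = 0) \<and> g x0 = infdist x0 S \<and> dnorm UNIV g \<le> 1"
proof -
  define d where "d = infdist x0 S"
  define G0 where "G0 = {p + q | p q. p \<in> (\<lambda>s. (s, 0)) ` S \<and> q \<in> span {(x0, d)}}"
  have "subspace G0"
    unfolding G0_def
    by (intro subspace_sums subspace_span linear_subspace_image[OF _ S]) (simp add: linear_iff)
  moreover have "\<forall>(x, y)\<in>G0. \<bar>y\<bar> \<le> 1 * norm x"
    using abs_mult_infdist_le[OF S] by (auto simp: G0_def span_singleton d_def)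
  ultimately obtain g where "linear g" and g_bound: "\<forall>x. \<bar>g x\<bar> \<le> 1 * norm x"
    and g_graph: "\<forall>(x, y)\<in>G0. g x = y"
    using Hahn_Banach_graph[of G0 1] by auto
  have "(s, 0) \<in> G0" if "s \<in> S" for s
    using sum_mem_span_singleton[of "(s, 0)" "(\<lambda>s. (s, 0 :: real)) ` S" 0 "(x0, d)"] that
    unfolding G0_def by auto
  then have "\<forall>x\<in>S. g x = 0"
    using g_graph by fastforce
  moreover have "(x0, d) \<in> G0"
    using sum_mem_span_singleton[of "(0, 0)" "(\<lambda>s. (s, 0 :: real)) ` S" 1 "(x0, d)"] subspace_0[OF S]
    unfolding G0_def by auto
  then have "g x0 = infdist x0 S"
    using g_graph by (fastforce simp: d_def)
  moreover have "g \<in> dual_sp UNIV"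
    unfolding dual_sp_UNIV_iff using \<open>linear g\<close> g_bound by blast
  moreover have "dnorm UNIV g \<le> 1"
    using dnorm_leI[OF subspace_UNIV, of 1 g] g_bound by simp
  ultimately show ?thesis
    by blast
qed

section \<open>Weak-star continuous linear functionals are evaluations\<close>

definition linear_functional_on :: "('a \<Rightarrow> real) set \<Rightarrow> (('a \<Rightarrow> real) \<Rightarrow> real) \<Rightarrow> bool" where
  "linear_functional_on Z \<psi> \<longleftrightarrow>
     (\<forall>f\<in>Z. \<forall>g\<in>Z. \<psi> (\<lambda>x. f x + g x) = \<psi> f + \<psi> g) \<and> (\<forall>c. \<forall>f\<in>Z. \<psi> (\<lambda>x. c * f x) = c * \<psi> f)"

lemma linear_functional_on_zero:
  assumes "linear_functional_on Z \<psi>" and "(\<lambda>x. 0) \<in> Z"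
  shows "\<psi> (\<lambda>x. 0) = 0"
  using assms(1)[unfolded linear_functional_on_def, THEN conjunct2, rule_format, OF assms(2), of 0]
  by simp

lemma annihilator_insert_correction:
  fixes Z :: "('a \<Rightarrow> real) set"
  assumes add: "\<And>f g. f \<in> Z \<Longrightarrow> g \<in> Z \<Longrightarrow> (\<lambda>x. f x + g x) \<in> Z"
    and scale: "\<And>c f. f \<in> Z \<Longrightarrow> (\<lambda>x. c * f x) \<in> Z"
    and \<psi>: "linear_functional_on Z \<psi>" and vanish: "\<forall>g\<in>Z. (\<forall>p\<in>insert q P. g p = 0) \<longrightarrow> \<psi> g = 0"
  shows "\<exists>c. \<forall>g\<in>Z. (\<forall>p\<in>P. g p = 0) \<longrightarrow> \<psi> g = c * g q"
proof (cases "\<exists>e\<in>Z. (\<forall>p\<in>P. e p = 0) \<and> e q = 1")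
  case True
  then obtain e where e: "e \<in> Z" "\<forall>p\<in>P. e p = 0" "e q = 1"
    by blast
  have "\<psi> g = \<psi> e * g q" if g: "g \<in> Z" "\<forall>p\<in>P. g p = 0" for g
  proof -
    have \<psi>_lin: "\<forall>f\<in>Z. \<forall>g\<in>Z. \<psi> (\<lambda>x. f x + g x) = \<psi> f + \<psi> g" "\<forall>c. \<forall>f\<in>Z. \<psi> (\<lambda>x. c * f x) = c * \<psi> f"
      using \<psi> unfolding linear_functional_on_def by blast+
    have h: "(\<lambda>x. g x + (- g q) * e x) \<in> Z"
      using add[OF g(1) scale[OF e(1)]] .
    have "\<forall>p\<in>insert q P. g p + (- g q) * e p = 0"
      using g(2) e(2,3) by simp
    then have "\<psi> (\<lambda>x. g x + (- g q) * e x) = 0"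
      using bspec[OF vanish h] by blast
    moreover have "\<psi> (\<lambda>x. g x + (- g q) * e x) = \<psi> g + \<psi> (\<lambda>x. (- g q) * e x)"
      by (rule bspec[OF bspec[OF \<psi>_lin(1) g(1)] scale[OF e(1)]])
    moreover have "\<psi> (\<lambda>x. (- g q) * e x) = - g q * \<psi> e"
      using \<psi>_lin(2) e(1) by blast
    ultimately show ?thesis
      by (simp add: algebra_simps)
  qed
  then show ?thesis
    by blast
next
  case False
  have "\<psi> g = 0" if g: "g \<in> Z" "\<forall>p\<in>P. g p = 0" for g
  proof -
    have "g q = 0"
    proof (rule ccontr)
      assume "g q \<noteq> 0"
      then have "(\<forall>p\<in>P. (1 / g q) * g p = 0) \<and> (1 / g q) * g q = 1"
        using g(2) by simp
      then have "\<exists>e\<in>Z. (\<forall>p\<in>P. e p = 0) \<and> e q = 1"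
        using scale[OF g(1), of "1 / g q"] by (intro bexI[of _ "\<lambda>x. (1 / g q) * g x"]) auto
      with False show False
        by blast
    qed
    then show ?thesis
      using vanish g by simp
  qed
  then show ?thesis
    by (intro exI[of _ 0]) simp
qed

lemma evaluation_if_vanishes_on_annihilator:
  fixes Z :: "('a::real_vector \<Rightarrow> real) set"
  assumes add: "\<And>f g. f \<in> Z \<Longrightarrow> g \<in> Z \<Longrightarrow> (\<lambda>x. f x + g x) \<in> Z"
    and scale: "\<And>c f. f \<in> Z \<Longrightarrow> (\<lambda>x. c * f x) \<in> Z"
    and lin: "\<And>f. f \<in> Z \<Longrightarrow> linear f"
    and "finite P" and "linear_functional_on Z \<psi>" and "\<forall>g\<in>Z. (\<forall>p\<in>P. g p = 0) \<longrightarrow> \<psi> g = 0"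
  shows "\<exists>x0. \<forall>g\<in>Z. \<psi> g = g x0"
  using assms(4-6)
proof (induction P arbitrary: \<psi> rule: finite_induct)
  case empty
  then show ?case
    using lin linear_0 by (metis empty_iff)
next
  case (insert q P)
  obtain c where c: "\<forall>g\<in>Z. (\<forall>p\<in>P. g p = 0) \<longrightarrow> \<psi> g = c * g q"
    using annihilator_insert_correction[OF add scale insert.prems] by blast
  have \<psi>_lin: "\<forall>f\<in>Z. \<forall>g\<in>Z. \<psi> (\<lambda>x. f x + g x) = \<psi> f + \<psi> g" "\<forall>a. \<forall>f\<in>Z. \<psi> (\<lambda>x. a * f x) = a * \<psi> f"
    using insert.prems(1) unfolding linear_functional_on_def by blast+
  have "linear_functional_on Z (\<lambda>g. \<psi> g - c * g q)"
    unfolding linear_functional_on_def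
  proof (intro conjI ballI allI)
    show "\<psi> (\<lambda>x. f x + g x) - c * (f q + g q) = (\<psi> f - c * f q) + (\<psi> g - c * g q)"
      if "f \<in> Z" "g \<in> Z" for f g
      using bspec[OF bspec[OF \<psi>_lin(1) that(1)] that(2)] by (simp add: algebra_simps)
    show "\<psi> (\<lambda>x. a * f x) - c * (a * f q) = a * (\<psi> f - c * f q)" if "f \<in> Z" for a f
      using bspec[OF spec[OF \<psi>_lin(2), of a] that] by (simp add: algebra_simps)
  qed
  moreover have "\<forall>g\<in>Z. (\<forall>p\<in>P. g p = 0) \<longrightarrow> \<psi> g - c * g q = 0"
    using c by simp
  ultimately obtain x1 where x1: "\<forall>g\<in>Z. \<psi> g - c * g q = g x1"
    using insert.IH[of "\<lambda>g. \<psi> g - c * g q"] by blast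
  have "\<psi> g = g (x1 + c *\<^sub>R q)" if "g \<in> Z" for g
  proof -
    have "g (x1 + c *\<^sub>R q) = g x1 + c * g q"
      using lin[OF that] by (simp add: linear_add linear_scale)
    then show ?thesis
      using bspec[OF x1 that] by linarith
  qed
  then show ?case
    by blast
qed

lemma continuous_on_fun_finitely_determined:
  fixes \<psi> :: "('a \<Rightarrow> real) \<Rightarrow> real"
  assumes cont: "continuous_on Z \<psi>" and zero: "(\<lambda>x. 0) \<in> Z" "\<psi> (\<lambda>x. 0) = 0"
  shows "\<exists>P \<epsilon>. finite P \<and> \<epsilon> > 0 \<and> (\<forall>g\<in>Z. (\<forall>p\<in>P. \<bar>g p\<bar> < \<epsilon>) \<longrightarrow> \<bar>\<psi> g\<bar> < 1)"
proof -
  obtain A where A: "open A" "A \<inter> Z = \<psi> -` {-1<..<1} \<inter> Z"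
    using cont unfolding continuous_on_open_invariant by (meson open_greaterThanLessThan)
  then have "(\<lambda>x. 0) \<in> A"
    using zero by auto
  then obtain X where X: "(\<lambda>x. 0) \<in> (\<Pi>\<^sub>E i\<in>UNIV. X i)" "\<forall>i. openin euclidean (X i)"
    "finite {i. X i \<noteq> topspace euclidean}" "(\<Pi>\<^sub>E i\<in>UNIV. X i) \<subseteq> A"
    using product_topology_open_contains_basis[of "\<lambda>i. euclidean" UNIV A] A(1)
    unfolding open_fun_def by blast
  define P where "P = {i. X i \<noteq> UNIV}"
  have "0 \<in> X i" "open (X i)" for i
    using X(1,2) by (auto simp: PiE_iff)
  then have "\<exists>e>0. ball 0 e \<subseteq> X i" for i
    using open_contains_ball by blast
  then obtain E where E: "\<forall>i. E i > 0 \<and> ball 0 (E i) \<subseteq> X i"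
    by metis
  define \<epsilon> where "\<epsilon> = Min (insert 1 (E ` P))"
  have "finite P"
    using X(3) by (simp add: P_def)
  then have \<epsilon>: "\<epsilon> > 0" "\<forall>i\<in>P. \<epsilon> \<le> E i"
    unfolding \<epsilon>_def using E by auto
  have "\<bar>\<psi> g\<bar> < 1" if g: "g \<in> Z" "\<forall>p\<in>P. \<bar>g p\<bar> < \<epsilon>" for g
  proof -
    have "g i \<in> X i" for i
      using E \<epsilon>(2) g(2) by (cases "i \<in> P") (force simp: P_def subset_iff)+
    then have "g \<in> A \<inter> Z"
      using X(4) g(1) by (auto simp: PiE_UNIV_domain)
    then show ?thesis
      using A(2) by auto
  qed
  with \<open>finite P\<close> \<epsilon>(1) show ?thesis
    by blast
qed

lemma continuous_linear_functional_eq_evaluation: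
  fixes Z :: "('a::real_vector \<Rightarrow> real) set"
  assumes add: "\<And>f g. f \<in> Z \<Longrightarrow> g \<in> Z \<Longrightarrow> (\<lambda>x. f x + g x) \<in> Z"
    and scale: "\<And>c f. f \<in> Z \<Longrightarrow> (\<lambda>x. c * f x) \<in> Z"
    and lin: "\<And>f. f \<in> Z \<Longrightarrow> linear f" and zero: "(\<lambda>x. 0) \<in> Z"
    and \<psi>: "linear_functional_on Z \<psi>" and cont: "continuous_on Z \<psi>"
  shows "\<exists>x0. \<forall>g\<in>Z. \<psi> g = g x0"
proof -
  have \<psi>_scale: "\<psi> (\<lambda>x. c * g x) = c * \<psi> g" if "g \<in> Z" for c g
    using \<psi> that unfolding linear_functional_on_def by blast
  obtain P \<epsilon> where "finite P" "\<epsilon> > 0" and small: "\<forall>g\<in>Z. (\<forall>p\<in>P. \<bar>g p\<bar> < \<epsilon>) \<longrightarrow> \<bar>\<psi> g\<bar> < 1"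
    using continuous_on_fun_finitely_determined[OF cont zero linear_functional_on_zero[OF \<psi> zero]]
    by blast
  \<comment> \<open>every multiple of a functional vanishing on \<open>P\<close> is small, so \<open>\<psi>\<close> vanishes on it\<close>
  have "\<psi> g = 0" if g: "g \<in> Z" "\<forall>p\<in>P. g p = 0" for g
  proof (rule ccontr)
    assume "\<psi> g \<noteq> 0"
    then have "\<bar>\<psi> (\<lambda>x. (2 / \<bar>\<psi> g\<bar>) * g x)\<bar> = 2"
      by (subst \<psi>_scale[OF g(1)]) (simp add: abs_mult)
    moreover have "\<bar>\<psi> (\<lambda>x. (2 / \<bar>\<psi> g\<bar>) * g x)\<bar> < 1"
      using small[THEN bspec, OF scale[OF g(1)], of "2 / \<bar>\<psi> g\<bar>"] g(2) \<open>\<epsilon> > 0\<close> by simp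
    ultimately show False
      by simp
  qed
  then show ?thesis
    using evaluation_if_vanishes_on_annihilator[OF add scale lin \<open>finite P\<close> \<psi>] by blast
qed

section \<open>Lifting norming subspaces to the whole space\<close>

lemma Ynorm_leI:
  assumes S: "subspace S" and Y0: "(\<lambda>x. 0) \<in> Y" and bound: "\<And>f. f \<in> Y \<Longrightarrow> dnorm S f \<le> 1 \<Longrightarrow> f x \<le> M"
  shows "Ynorm S Y x \<le> M"
  unfolding Ynorm_def
proof (rule cSup_least)
  have "dnorm S (\<lambda>x. 0) \<le> 1"
    by (rule dnorm_leI[OF S]) auto
  then show "{f x |f. f \<in> Y \<and> dnorm S f \<le> 1} \<noteq> {}"
    using Y0 by blast
qed (use bound in blast)

lemma Ynorm_le_norm:
  assumes S: "subspace S" and Y: "Y \<subseteq> dual_sp S" "(\<lambda>x. 0) \<in> Y" and x: "x \<in> S"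
  shows "Ynorm S Y x \<le> norm x"
proof (rule Ynorm_leI[OF S Y(2)])
  fix f
  assume "f \<in> Y" "dnorm S f \<le> 1"
  then have "\<bar>f x\<bar> \<le> 1 * norm x"
    using dual_sp_abs_le_dnorm[OF _ S x] Y(1) mult_right_mono[OF _ norm_ge_zero] by (meson order_trans subsetD)
  then show "f x \<le> norm x"
    by simp
qed

lemma le_Ynorm:
  assumes S: "subspace S" and Y: "Y \<subseteq> dual_sp S" and f: "f \<in> Y" "dnorm S f \<le> 1" and x: "x \<in> S"
  shows "f x \<le> Ynorm S Y x"
  unfolding Ynorm_def
proof (rule cSup_upper)
  have "g x \<le> norm x" if "g \<in> Y" "dnorm S g \<le> 1" for g
  proof -
    have "\<bar>g x\<bar> \<le> dnorm S g * norm x"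
      using dual_sp_abs_le_dnorm[OF _ S x] that Y by blast
    also have "\<dots> \<le> norm x"
      using mult_right_mono[OF that(2) norm_ge_zero] by simp
    finally show ?thesis
      by simp
  qed
  then show "bdd_above {f x |f. f \<in> Y \<and> dnorm S f \<le> 1}"
    unfolding bdd_above_def by blast
qed (use f in blast)

lemma exists_dist_le_twice_infdist:
  assumes "closed S" and "S \<noteq> {}"
  shows "\<exists>s\<in>S. norm (x - s) \<le> 2 * infdist x S"
proof (cases "x \<in> S")
  case False
  have "bdd_below (dist x ` S)"
    by (rule bdd_belowI[of _ 0]) auto
  moreover have "(INF s\<in>S. dist x s) < 2 * infdist x S"
    using infdist_pos_not_in_closed[OF assms False] infdist_notempty[OF assms(2), of x] by linarith
  ultimately have "\<exists>s\<in>S. dist x s < 2 * infdist x S"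
    using assms(2) by (subst (asm) cINF_less_iff) simp_all
  then show ?thesis
    by (metis dist_norm less_imp_le)
next
  case True
  then show ?thesis
    by (intro bexI[of _ x]) simp_all
qed

definition dual_preimage :: "'a::real_normed_vector set \<Rightarrow> ('a \<Rightarrow> real) set \<Rightarrow> ('a \<Rightarrow> real) set" where
  "dual_preimage S Y = {g \<in> dual_sp UNIV. restr S g \<in> Y}"

lemma dual_subspace_dual_preimage:
  assumes "dual_subspace S Y"
  shows "dual_subspace UNIV (dual_preimage S Y)"
  using assms dual_sp_add dual_sp_scale dual_sp_zero
  unfolding dual_subspace_def dual_preimage_def by (auto simp: restr_add restr_scale restr_zero)

lemma norm_closed_dual_preimage:
  assumes S: "subspace S" and Y: "norm_closed S Y"
  shows "norm_closed UNIV (dual_preimage S Y)"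
  unfolding norm_closed_def
proof (intro ballI impI)
  fix g
  assume g: "g \<in> dual_sp UNIV" and approx: "\<forall>e>0. \<exists>f\<in>dual_preimage S Y. dnorm UNIV (\<lambda>x. f x - g x) < e"
  have "\<exists>f\<in>Y. dnorm S (\<lambda>x. f x - restr S g x) < e" if e: "e > 0" for e
  proof -
    obtain f where f: "f \<in> dual_preimage S Y" "dnorm UNIV (\<lambda>x. f x - g x) < e"
      using approx e by blast
    then have f': "f \<in> dual_sp UNIV" "restr S f \<in> Y"
      by (simp_all add: dual_preimage_def)
    have "dnorm S (\<lambda>x. restr S f x - restr S g x) = dnorm S (restr S (\<lambda>x. f x - g x))"
      by (simp add: restr_diff)
    also have "\<dots> \<le> dnorm UNIV (\<lambda>x. f x - g x)"
      by (rule dnorm_restr_le[OF S dual_sp_diff[OF f'(1) g]])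
    finally show ?thesis
      using f(2) f'(2) by (intro bexI[of _ "restr S f"]) simp_all
  qed
  then have "restr S g \<in> Y"
    using Y restr_in_dual_sp[OF S g] unfolding norm_closed_def by blast
  then show "g \<in> dual_preimage S Y"
    using g by (simp add: dual_preimage_def)
qed

lemma restr_dual_preimage_surj:
  assumes S: "subspace S" and Y: "Y \<subseteq> dual_sp S" and f: "f \<in> Y" and B: "dnorm S f \<le> B"
  shows "\<exists>g\<in>dual_preimage S Y. dnorm UNIV g \<le> B \<and> restr S g = f"
  using dual_sp_extension[OF S _ B] f Y unfolding dual_preimage_def by blast

lemma distance_functional_dual_preimage:
  assumes S: "subspace S" and Y0: "(\<lambda>x. 0) \<in> Y"
  shows "\<exists>g\<in>dual_preimage S Y. (\<forall>x\<in>S. g x = 0) \<and> g x0 = infdist x0 S \<and> dnorm UNIV g \<le> 1"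
  using distance_functional[OF S, of x0] Y0 by (auto simp: dual_preimage_def restr_eq_0)

lemma infdist_le_Ynorm_dual_preimage:
  assumes S: "subspace S" and Y0: "(\<lambda>x. 0) \<in> Y"
  shows "infdist x S \<le> Ynorm UNIV (dual_preimage S Y) x"
proof -
  obtain g where g: "g \<in> dual_preimage S Y" "g x = infdist x S" "dnorm UNIV g \<le> 1"
    using distance_functional_dual_preimage[OF S Y0] by blast
  have "g x \<le> Ynorm UNIV (dual_preimage S Y) x"
    by (rule le_Ynorm[OF subspace_UNIV _ g(1) g(3)]) (auto simp: dual_preimage_def)
  with g(2) show ?thesis
    by simp
qed

lemma Ynorm_le_Ynorm_dual_preimage:
  assumes S: "subspace S" and Y: "dual_subspace S Y" and s: "s \<in> S"
  shows "Ynorm S Y s \<le> Ynorm UNIV (dual_preimage S Y) x + norm (x - s)"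
proof (rule Ynorm_leI[OF S])
  show "(\<lambda>x. 0) \<in> Y"
    using Y by (simp add: dual_subspace_def)
  fix f
  assume "f \<in> Y" "dnorm S f \<le> 1"
  then obtain g where g: "g \<in> dual_preimage S Y" "dnorm UNIV g \<le> 1" "restr S g = f"
    using restr_dual_preimage_surj[OF S] Y by (meson dual_subspace_def)
  then have g': "g \<in> dual_sp UNIV"
    by (simp add: dual_preimage_def)
  have "g x \<le> Ynorm UNIV (dual_preimage S Y) x"
    using le_Ynorm[OF subspace_UNIV _ g(1,2)] by (auto simp: dual_preimage_def)
  moreover have "\<bar>g (x - s)\<bar> \<le> dnorm UNIV g * norm (x - s)"
    using dual_sp_abs_le_dnorm[OF g' subspace_UNIV] by simp
  moreover have "dnorm UNIV g * norm (x - s) \<le> norm (x - s)"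
    using mult_right_mono[OF g(2) norm_ge_zero] by simp
  moreover have "f s = g x - g (x - s)"
    using g(3) s dual_spD(1)[OF g', of "x - s" s] by (auto simp: restr_def)
  ultimately show "f s \<le> Ynorm UNIV (dual_preimage S Y) x + norm (x - s)"
    by linarith
qed

lemma norming_dual_preimage:
  assumes S: "subspace S" "closed S" and Y: "dual_subspace S Y" and norming: "norming S Y"
  shows "norming UNIV (dual_preimage S Y)"
proof -
  obtain c where c: "c > 0" and c_le: "\<forall>s\<in>S. c * norm s \<le> Ynorm S Y s"
    using norming unfolding norming_def by blast
  have Y0: "(\<lambda>x. 0) \<in> Y"
    using Y by (simp add: dual_subspace_def)
  \<comment> \<open>\<open>x\<close> is within \<open>2 d(x, S)\<close> of some \<open>s \<in> S\<close>, and both \<open>d(x, S)\<close> and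
    \<open>Ynorm S Y s - norm (x - s)\<close> are bounded by the \<open>Z\<close>-norm of \<open>x\<close>\<close>
  have lower: "c / (3 + 2 * c) * norm x \<le> Ynorm UNIV (dual_preimage S Y) x" for x
  proof -
    define N where "N = Ynorm UNIV (dual_preimage S Y) x"
    have d: "infdist x S \<le> N"
      unfolding N_def using infdist_le_Ynorm_dual_preimage[OF S(1) Y0] .
    obtain s where s: "s \<in> S" "norm (x - s) \<le> 2 * infdist x S"
      using exists_dist_le_twice_infdist[OF S(2)] subspace_0[OF S(1)] by blast
    have "c * norm s \<le> Ynorm S Y s"
      using c_le s(1) by blast
    also have "\<dots> \<le> N + norm (x - s)"
      unfolding N_def by (rule Ynorm_le_Ynorm_dual_preimage[OF S(1) Y s(1)])
    finally have "c * norm s \<le> N + norm (x - s)" .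
    have "norm (x - s) \<le> 2 * N"
      using s(2) d by linarith
    have "c * norm x \<le> c * norm s + c * norm (x - s)"
      using norm_triangle_sub[of x s] c by (simp add: distrib_left [symmetric])
    also have "\<dots> \<le> (N + norm (x - s)) + c * norm (x - s)"
      using \<open>c * norm s \<le> N + norm (x - s)\<close> by linarith
    also have "\<dots> \<le> (N + 2 * N) + c * (2 * N)"
      using \<open>norm (x - s) \<le> 2 * N\<close> c by (intro add_mono mult_left_mono) auto
    also have "\<dots> = (3 + 2 * c) * N"
      by (simp add: algebra_simps)
    finally have "c * norm x \<le> (3 + 2 * c) * N" .
    then show ?thesis
      using c by (simp add: N_def pos_divide_le_eq mult.commute)
  qed
  have upper: "Ynorm UNIV (dual_preimage S Y) x \<le> 1 * norm x" for x
    using Ynorm_le_norm[OF subspace_UNIV] dual_subspace_dual_preimage[OF Y]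
    unfolding dual_subspace_def by auto
  show ?thesis
    unfolding norming_def
    by (intro exI[of _ "c / (3 + 2 * c)"] exI[of _ 1] conjI ballI lower upper) (use c in simp_all)
qed

lemma dual_subspace_UNIV_D:
  assumes "dual_subspace UNIV Z"
  shows "\<And>f g. f \<in> Z \<Longrightarrow> g \<in> Z \<Longrightarrow> (\<lambda>x. f x + g x) \<in> Z"
    and "\<And>c f. f \<in> Z \<Longrightarrow> (\<lambda>x. c * f x) \<in> Z"
    and "\<And>f. f \<in> Z \<Longrightarrow> linear f"
    and "(\<lambda>x. 0) \<in> Z"
  using assms unfolding dual_subspace_def by (auto simp: dual_sp_UNIV_iff)

lemma norming_closed_dual_preimage:
  assumes S: "subspace S" "closed S" and Y: "dual_subspace S Y \<and> norming S Y \<and> norm_closed S Y"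
  shows "dual_subspace UNIV (dual_preimage S Y) \<and> norming UNIV (dual_preimage S Y) \<and>
    norm_closed UNIV (dual_preimage S Y)"
  using Y dual_subspace_dual_preimage norming_dual_preimage[OF S] norm_closed_dual_preimage[OF S(1)]
  by blast

section \<open>Fully Mazur spaces\<close>

definition seq_continuous_on :: "('a \<Rightarrow> real) set \<Rightarrow> (('a \<Rightarrow> real) \<Rightarrow> real) \<Rightarrow> bool" where
  "seq_continuous_on Y \<phi> \<longleftrightarrow>
     (\<forall>F f. (\<forall>n. F n \<in> Y) \<and> f \<in> Y \<and> F \<longlonglongrightarrow> f \<longrightarrow> (\<lambda>n. \<phi> (F n)) \<longlonglongrightarrow> \<phi> f)"

lemma fully_Mazur_iff:
  "fully_Mazur S \<longleftrightarrow>
     (\<forall>Y. dual_subspace S Y \<and> norming S Y \<and> norm_closed S Y \<longrightarrow>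
        (\<forall>\<phi>. linear_functional_on Y \<phi> \<and> seq_continuous_on Y \<phi> \<longrightarrow> continuous_on Y \<phi>))"
  unfolding fully_Mazur_def linear_functional_on_def seq_continuous_on_def conj_assoc ..

lemma linear_functional_on_comp_restr:
  assumes "linear_functional_on Y \<phi>"
  shows "linear_functional_on (dual_preimage S Y) (\<lambda>g. \<phi> (restr S g))"
  using assms unfolding linear_functional_on_def dual_preimage_def by (simp add: restr_add restr_scale)

lemma seq_continuous_on_comp_restr:
  assumes \<phi>: "seq_continuous_on Y \<phi>"
  shows "seq_continuous_on (dual_preimage S Y) (\<lambda>g. \<phi> (restr S g))"
  unfolding seq_continuous_on_def
proof (intro allI impI)
  fix F f
  assume F: "(\<forall>n. F n \<in> dual_preimage S Y) \<and> f \<in> dual_preimage S Y \<and> F \<longlonglongrightarrow> f"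
  then have "F \<longlonglongrightarrow> f"
    by blast
  then have "(\<lambda>n. restr S (F n)) \<longlonglongrightarrow> restr S f"
    using continuous_on_tendsto_compose[OF continuous_on_restr[of UNIV]] by simp
  moreover have "\<forall>n. restr S (F n) \<in> Y" "restr S f \<in> Y"
    using F by (simp_all add: dual_preimage_def)
  ultimately show "(\<lambda>n. \<phi> (restr S (F n))) \<longlonglongrightarrow> \<phi> (restr S f)"
    using \<phi>[unfolded seq_continuous_on_def, rule_format, of "\<lambda>n. restr S (F n)"] by blast
qed

lemma evaluation_of_dual_preimage:
  assumes S: "subspace S" "closed S" and Y: "dual_subspace S Y" and \<phi>: "linear_functional_on Y \<phi>"
    and x0: "\<forall>g\<in>dual_preimage S Y. \<phi> (restr S g) = g x0"
  shows "\<forall>f\<in>Y. \<phi> f = f x0"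
proof
  have Y0: "(\<lambda>x. 0) \<in> Y" and Y_sub: "Y \<subseteq> dual_sp S"
    using Y by (auto simp: dual_subspace_def)
  have "x0 \<in> S"
  proof (rule ccontr)
    assume "x0 \<notin> S"
    obtain g where g: "g \<in> dual_preimage S Y" "\<forall>x\<in>S. g x = 0" "g x0 = infdist x0 S"
      using distance_functional_dual_preimage[OF S(1) Y0] by blast
    have "g x0 = \<phi> (restr S g)"
      using x0 g(1) by simp
    then have "g x0 = 0"
      using restr_eq_0[OF g(2)] linear_functional_on_zero[OF \<phi> Y0] by simp
    moreover have "infdist x0 S > 0"
      using infdist_pos_not_in_closed[OF S(2) _ \<open>x0 \<notin> S\<close>] subspace_0[OF S(1)] by blast
    ultimately show False
      using g(3) by simp
  qed
  fix f
  assume "f \<in> Y"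
  then obtain g where "g \<in> dual_preimage S Y" "restr S g = f"
    using restr_dual_preimage_surj[OF S(1) Y_sub _ order_refl] by blast
  then show "\<phi> f = f x0"
    using x0 \<open>x0 \<in> S\<close> by (auto simp: restr_def)
qed

lemma fully_Mazur_closed_subspace:
  fixes S :: "'a::banach set"
  assumes S: "subspace S" "closed S" and Mazur: "fully_Mazur (UNIV :: 'a set)"
  shows "fully_Mazur S"
  unfolding fully_Mazur_iff
proof (intro allI impI)
  fix Y and \<phi> :: "('a \<Rightarrow> real) \<Rightarrow> real"
  assume Y: "dual_subspace S Y \<and> norming S Y \<and> norm_closed S Y"
    and \<phi>: "linear_functional_on Y \<phi> \<and> seq_continuous_on Y \<phi>"
  define Z where "Z = dual_preimage S Y"
  have Z: "dual_subspace UNIV Z \<and> norming UNIV Z \<and> norm_closed UNIV Z"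
    unfolding Z_def using norming_closed_dual_preimage[OF S Y] .
  have \<psi>: "linear_functional_on Z (\<lambda>g. \<phi> (restr S g))" "seq_continuous_on Z (\<lambda>g. \<phi> (restr S g))"
    unfolding Z_def using \<phi> linear_functional_on_comp_restr seq_continuous_on_comp_restr by blast+
  then have "continuous_on Z (\<lambda>g. \<phi> (restr S g))"
    using Mazur Z unfolding fully_Mazur_iff by blast
  then obtain x0 where "\<forall>g\<in>Z. \<phi> (restr S g) = g x0"
    using continuous_linear_functional_eq_evaluation[OF dual_subspace_UNIV_D[of Z] \<psi>(1)] Z by blast
  then have "\<forall>f\<in>Y. \<phi> f = f x0"
    using evaluation_of_dual_preimage[OF S _ conjunct1[OF \<phi>]] Y unfolding Z_def by blast
  then have "continuous_on Y \<phi> \<longleftrightarrow> continuous_on Y (\<lambda>f. f x0)"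
    by (intro continuous_on_cong) simp_all
  moreover have "continuous_on Y (\<lambda>f. f x0)"
    by (rule continuous_on_subset[OF continuous_on_product_coordinates]) simp
  ultimately show "continuous_on Y \<phi>"
    by blast
qed

section \<open>Uniform boundedness of weak-star compact sets\<close>

lemma dual_sp_continuous_on:
  assumes S: "subspace S" and f: "f \<in> dual_sp S"
  shows "continuous_on S f"
  unfolding continuous_on_iff
proof (intro ballI allI impI)
  fix x and e :: real
  assume x: "x \<in> S" and e: "e > 0"
  define L where "L = dnorm S f + 1"
  have L: "L > 0"
    using dnorm_nonneg[OF f S] by (simp add: L_def)
  have "dist (f y) (f x) < e" if y: "y \<in> S" "dist y x < e / L" for y
  proof -
    have yx: "y - x \<in> S"
      using S x y(1) by (simp add: subspace_diff)
    have "dist (f y) (f x) = \<bar>f (y - x)\<bar>"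
      using dual_spD(1)[OF f yx x] by (simp add: dist_real_def)
    also have "\<dots> \<le> L * norm (y - x)"
      using dual_sp_abs_le_dnorm[OF f S yx] by (simp add: L_def distrib_right add_increasing2)
    also have "\<dots> < e"
      using y(2) L by (simp add: dist_norm field_simps)
    finally show ?thesis .
  qed
  then show "\<exists>d>0. \<forall>y\<in>S. dist y x < d \<longrightarrow> dist (f y) (f x) < e"
    using e L by (intro exI[of _ "e / L"]) auto
qed

lemma closedin_uniformly_bounded:
  fixes K :: "('a::topological_space \<Rightarrow> real) set" and c :: real
  assumes cont: "\<And>f. f \<in> K \<Longrightarrow> continuous_on S f"
  shows "closedin (top_of_set S) {s \<in> S. \<forall>f\<in>K. \<bar>f s\<bar> \<le> c}"
proof -
  have "closedin (top_of_set S) (\<Inter> (insert S ((\<lambda>f. S \<inter> f -` {- c..c}) ` K)))"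
    by (rule closedin_Inter) (use continuous_closedin_preimage[OF cont closed_atLeastAtMost] in auto)
  moreover have "\<Inter> (insert S ((\<lambda>f. S \<inter> f -` {- c..c}) ` K)) = {s \<in> S. \<forall>f\<in>K. \<bar>f s\<bar> \<le> c}"
    by (auto simp: abs_le_iff)
  ultimately show ?thesis
    by simp
qed

lemma Baire_uniformly_bounded_on_ball:
  fixes S :: "'a::complete_space set" and K :: "('a \<Rightarrow> real) set"
  assumes S: "closed S" "S \<noteq> {}" and cont: "\<And>f. f \<in> K \<Longrightarrow> continuous_on S f"
    and pointwise: "\<And>s. s \<in> S \<Longrightarrow> \<exists>b. \<forall>f\<in>K. \<bar>f s\<bar> \<le> b"
  shows "\<exists>M s0 \<delta>. s0 \<in> S \<and> \<delta> > 0 \<and> (\<forall>s\<in>S \<inter> ball s0 \<delta>. \<forall>f\<in>K. \<bar>f s\<bar> \<le> M)"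
proof -
  define A where "A n = {s \<in> S. \<forall>f\<in>K. \<bar>f s\<bar> \<le> real n}" for n
  have union_A: "\<Union> (range A) = S"
  proof
    show "S \<subseteq> \<Union> (range A)"
    proof
      fix s
      assume "s \<in> S"
      then obtain b where "\<forall>f\<in>K. \<bar>f s\<bar> \<le> b"
        using pointwise by blast
      moreover obtain n where "b \<le> real n"
        using real_arch_simple by blast
      ultimately have "s \<in> A n"
        using \<open>s \<in> S\<close> unfolding A_def by (fastforce intro: order_trans)
      then show "s \<in> \<Union> (range A)"
        by blast
    qed
  qed (auto simp: A_def)
  have complete: "completely_metrizable_space (top_of_set S)"
    using S(1) by (simp add: completely_metrizable_space_closedin completely_metrizable_space_euclidean)
  have closed_A: "closedin (top_of_set S) (A n)" for n
    unfolding A_def by (rule closedin_uniformly_bounded[OF cont])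
  have "\<exists>n. top_of_set S interior_of A n \<noteq> {}"
  proof (rule ccontr)
    assume "\<not> (\<exists>n. top_of_set S interior_of A n \<noteq> {})"
    then have "top_of_set S interior_of \<Union> (range A) = {}"
      using closed_A complete by (intro Baire_category_alt disjI1) auto
    then show False
      using S(2) union_A by (metis interior_of_topspace topspace_euclidean_subtopology)
  qed
  then obtain n s0 T where "s0 \<in> T" "openin (top_of_set S) T" "T \<subseteq> A n"
    unfolding interior_of_def by blast
  moreover from this obtain U where "open U" "T = S \<inter> U"
    unfolding openin_open by blast
  moreover from this obtain \<delta> where "\<delta> > 0" "ball s0 \<delta> \<subseteq> U"
    using \<open>s0 \<in> T\<close> open_contains_ball by blast
  ultimately show ?thesis
    unfolding A_def by blast
qed

lemma dnorm_le_of_bounded_on_ball: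
  assumes S: "subspace S" and f: "f \<in> dual_sp S" and s0: "s0 \<in> S" and \<delta>: "\<delta> > 0"
    and bound: "\<forall>s\<in>S \<inter> ball s0 \<delta>. \<bar>f s\<bar> \<le> M"
  shows "dnorm S f \<le> 4 * M / \<delta>"
proof (rule dnorm_leI[OF S])
  have "M \<ge> 0"
    using bound s0 \<delta> by force
  then show "4 * M / \<delta> \<ge> 0"
    using \<delta> by simp
  show "\<forall>s\<in>S. \<bar>f s\<bar> \<le> 4 * M / \<delta> * norm s"
  proof
    fix s
    assume s: "s \<in> S"
    show "\<bar>f s\<bar> \<le> 4 * M / \<delta> * norm s"
    proof (cases "s = 0")
      case False
      define c where "c = \<delta> / (2 * norm s)"
      have c: "c > 0"
        using False \<delta> by (simp add: c_def)
      have cs: "c *\<^sub>R s \<in> S" "s0 + c *\<^sub>R s \<in> S \<inter> ball s0 \<delta>"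
        using False \<delta> S s s0 by (auto simp: c_def dist_norm subspace_scale subspace_add)
      have "\<bar>f (s0 + c *\<^sub>R s)\<bar> \<le> M" "\<bar>f s0\<bar> \<le> M"
        using bound cs(2) s0 \<delta> by auto
      moreover have "f (s0 + c *\<^sub>R s) = f s0 + c * f s"
        using dual_spD(1,2)[OF f] s0 s cs(1) by simp
      ultimately have "c * \<bar>f s\<bar> \<le> 2 * M"
        using c by (simp add: abs_mult)
      then show ?thesis
        using c False \<delta> by (simp add: c_def field_simps)
    qed (use dual_sp_apply_0[OF S f] in simp)
  qed
qed

lemma compact_dual_sp_dnorm_bounded:
  fixes S :: "'a::banach set"
  assumes S: "subspace S" "closed S" and K: "K \<subseteq> dual_sp S" "compact K"
  shows "\<exists>M\<ge>0. \<forall>f\<in>K. dnorm S f \<le> M"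
proof -
  have "\<exists>b. \<forall>f\<in>K. \<bar>f s\<bar> \<le> b" for s
  proof -
    have "compact ((\<lambda>f. f s) ` K)"
      by (rule compact_continuous_image[OF continuous_on_subset[OF continuous_on_product_coordinates] K(2)])
        simp
    then obtain b where "\<forall>v\<in>(\<lambda>f. f s) ` K. norm v \<le> b"
      using compact_imp_bounded bounded_iff by metis
    then show ?thesis
      by auto
  qed
  moreover have "continuous_on S f" if "f \<in> K" for f
    using dual_sp_continuous_on[OF S(1)] K(1) that by blast
  ultimately obtain M s0 \<delta> where "s0 \<in> S" "\<delta> > 0" and M: "\<forall>s\<in>S \<inter> ball s0 \<delta>. \<forall>f\<in>K. \<bar>f s\<bar> \<le> M"
    using Baire_uniformly_bounded_on_ball[OF S(2)] subspace_0[OF S(1)] by blast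
  then have "\<forall>f\<in>K. dnorm S f \<le> 4 * M / \<delta>"
    using dnorm_le_of_bounded_on_ball[OF S(1) _ \<open>s0 \<in> S\<close> \<open>\<delta> > 0\<close>] K(1) by blast
  then show ?thesis
    by (intro exI[of _ "max 0 (4 * M / \<delta>)"]) auto
qed

section \<open>Fully Mackey complete spaces\<close>

text \<open>There is no \<open>t2_space\<close> instance for function spaces, so \<open>compact_imp_closed\<close>
  does not apply directly.\<close>

lemma compact_imp_closed_fun:
  fixes K :: "('a \<Rightarrow> real) set"
  assumes "compact K"
  shows "closed K"
proof -
  have "Hausdorff_space (euclidean :: ('a \<Rightarrow> real) topology)"
    unfolding euclidean_product_topology[symmetric] Hausdorff_space_product_topology by simp
  moreover have "compactin euclidean K"
    using assms by simp
  ultimately have "closedin euclidean K"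
    by (rule compactin_imp_closedin)
  then show ?thesis
    using closed_closedin by blast
qed

lemma compact_PiE_cball_fun: "compact (Pi\<^sub>E UNIV (\<lambda>x. cball (c x :: 'b::heine_borel) (r x)))"
proof -
  have "compactin (product_topology (\<lambda>_. euclidean) UNIV) (Pi\<^sub>E UNIV (\<lambda>x. cball (c x) (r x)))"
    unfolding compactin_PiE by simp
  then show ?thesis
    unfolding euclidean_product_topology by simp
qed

definition mackey_Cauchy :: "('a \<Rightarrow> real) set \<Rightarrow> 'a filter \<Rightarrow> bool" where
  "mackey_Cauchy Y F \<longleftrightarrow>
     (\<forall>K\<in>mackey_sets Y. \<forall>e>0. eventually (\<lambda>(x, y). \<forall>f\<in>K. \<bar>f x - f y\<bar> \<le> e) (F \<times>\<^sub>F F))"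

definition mackey_limit :: "('a \<Rightarrow> real) set \<Rightarrow> 'a filter \<Rightarrow> 'a \<Rightarrow> bool" where
  "mackey_limit Y F z \<longleftrightarrow> (\<forall>K\<in>mackey_sets Y. \<forall>e>0. eventually (\<lambda>x. \<forall>f\<in>K. \<bar>f x - f z\<bar> \<le> e) F)"

lemma mackey_complete_iff:
  "mackey_complete S Y \<longleftrightarrow>
     (\<forall>F. F \<noteq> bot \<and> eventually (\<lambda>x. x \<in> S) F \<and> mackey_Cauchy Y F \<longrightarrow> (\<exists>z\<in>S. mackey_limit Y F z))"
  unfolding mackey_complete_def mackey_Cauchy_def mackey_limit_def ..

lemma restr_image_mackey_sets:
  assumes "K \<in> mackey_sets (dual_preimage S Y)"
  shows "restr S ` K \<in> mackey_sets Y"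
  unfolding mackey_sets_def
proof (intro CollectI conjI ballI allI impI)
  show "restr S ` K \<subseteq> Y"
    using assms by (auto simp: mackey_sets_def dual_preimage_def)
  show "compact (restr S ` K)"
    using assms continuous_on_restr by (auto simp: mackey_sets_def intro: compact_continuous_image)
  fix f g and a b :: real
  assume "f \<in> restr S ` K" "g \<in> restr S ` K" "\<bar>a\<bar> + \<bar>b\<bar> \<le> 1"
  then obtain f' g' where "f' \<in> K" "g' \<in> K" "f = restr S f'" "g = restr S g'" "(\<lambda>x. a * f' x + b * g' x) \<in> K"
    using assms unfolding mackey_sets_def by blast
  moreover have "(\<lambda>x. a * f x + b * g x) = restr S (\<lambda>x. a * f' x + b * g' x)" if "f = restr S f'" "g = restr S g'"
    using that by (auto simp: restr_def)
  ultimately show "(\<lambda>x. a * f x + b * g x) \<in> restr S ` K"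
    by blast
qed

lemma mackey_Cauchy_dual_preimage:
  assumes FS: "eventually (\<lambda>x. x \<in> S) F" and Cauchy: "mackey_Cauchy Y F"
  shows "mackey_Cauchy (dual_preimage S Y) F"
  unfolding mackey_Cauchy_def
proof (intro ballI allI impI)
  fix K and e :: real
  assume "K \<in> mackey_sets (dual_preimage S Y)" "e > 0"
  then have "eventually (\<lambda>(x, y). \<forall>f\<in>restr S ` K. \<bar>f x - f y\<bar> \<le> e) (F \<times>\<^sub>F F)"
    using Cauchy restr_image_mackey_sets unfolding mackey_Cauchy_def by blast
  moreover have "eventually (\<lambda>(x, y). x \<in> S \<and> y \<in> S) (F \<times>\<^sub>F F)"
    using eventually_prodI[OF FS FS] by (simp add: case_prod_unfold)
  ultimately show "eventually (\<lambda>(x, y). \<forall>f\<in>K. \<bar>f x - f y\<bar> \<le> e) (F \<times>\<^sub>F F)"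
    by eventually_elim (auto simp: restr_def)
qed

lemma segment_mackey_sets:
  assumes g: "g \<in> Z" and scale: "\<forall>c. \<forall>f\<in>Z. (\<lambda>x. c * f x) \<in> Z"
  shows "(\<lambda>t x. t * g x) ` {-1..1} \<in> mackey_sets Z"
  unfolding mackey_sets_def
proof (intro CollectI conjI ballI allI impI)
  show "(\<lambda>t x. t * g x) ` {-1..1} \<subseteq> Z"
    using g scale by blast
  show "compact ((\<lambda>t x. t * g x) ` {-1..1})"
    by (intro compact_continuous_image continuous_on_coordinatewise_then_product continuous_intros) simp
  fix f h and a b :: real
  assume "f \<in> (\<lambda>t x. t * g x) ` {-1..1}" "h \<in> (\<lambda>t x. t * g x) ` {-1..1}" and ab: "\<bar>a\<bar> + \<bar>b\<bar> \<le> 1"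
  then obtain s t where st: "\<bar>s\<bar> \<le> 1" "\<bar>t\<bar> \<le> 1" "f = (\<lambda>x. s * g x)" "h = (\<lambda>x. t * g x)"
    by (auto simp: abs_le_iff)
  have "\<bar>a * s + b * t\<bar> \<le> \<bar>a\<bar> * 1 + \<bar>b\<bar> * 1"
    using st(1,2) abs_triangle_ineq[of "a * s" "b * t"]
      mult_left_mono[OF st(1), of "\<bar>a\<bar>"] mult_left_mono[OF st(2), of "\<bar>b\<bar>"]
    by (simp add: abs_mult)
  then have "a * s + b * t \<in> {-1..1}"
    using ab by (simp add: abs_le_iff)
  moreover have "(\<lambda>x. a * f x + b * h x) = (\<lambda>x. (a * s + b * t) * g x)"
    using st(3,4) by (simp add: fun_eq_iff algebra_simps)
  ultimately show "(\<lambda>x. a * f x + b * h x) \<in> (\<lambda>t x. t * g x) ` {-1..1}"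
    by blast
qed

lemma mackey_limit_in_subspace:
  assumes S: "subspace S" "closed S" and Y: "dual_subspace S Y"
    and F: "F \<noteq> bot" "eventually (\<lambda>x. x \<in> S) F" and z: "mackey_limit (dual_preimage S Y) F z"
  shows "z \<in> S"
proof (rule ccontr)
  assume "z \<notin> S"
  then have d: "infdist z S > 0"
    using infdist_pos_not_in_closed[OF S(2)] subspace_0[OF S(1)] by blast
  have Y0: "(\<lambda>x. 0) \<in> Y"
    using Y by (simp add: dual_subspace_def)
  obtain g where g: "g \<in> dual_preimage S Y" "\<forall>x\<in>S. g x = 0" "g z = infdist z S"
    using distance_functional_dual_preimage[OF S(1) Y0] by blast
  have "(\<lambda>t x. t * g x) ` {-1..1} \<in> mackey_sets (dual_preimage S Y)"
    using segment_mackey_sets[OF g(1)] dual_subspace_dual_preimage[OF Y] by (simp add: dual_subspace_def)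
  then have ev: "eventually (\<lambda>x. \<forall>f\<in>(\<lambda>t x. t * g x) ` {-1..1}. \<bar>f x - f z\<bar> \<le> infdist z S / 2) F"
    using z d unfolding mackey_limit_def by (meson half_gt_zero)
  have "g \<in> (\<lambda>t x. t * g x) ` {-1..1}"
    by (rule image_eqI[of _ _ 1]) auto
  then have "eventually (\<lambda>x. \<bar>g x - g z\<bar> \<le> infdist z S / 2) F"
    by (intro eventually_mono[OF ev]) blast
  with F(2) have "eventually (\<lambda>x. False) F"
    by eventually_elim (use g(2,3) d in auto)
  with F(1) show False
    by (simp add: eventually_False)
qed

lemma closed_linear_fun: "closed {g :: 'a::real_vector \<Rightarrow> real. linear g}"
proof -
  have "{g :: 'a \<Rightarrow> real. linear g} =
      {g. \<forall>x y. g (x + y) = g x + g y} \<inter> {g. \<forall>c x. g (c *\<^sub>R x) = c * g x}"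
    by (auto simp: linear_iff)
  moreover have "closed {g :: 'a \<Rightarrow> real. \<forall>x y. g (x + y) = g x + g y}"
    by (intro closed_Collect_all closed_Collect_eq continuous_intros continuous_on_product_coordinates)
  moreover have "closed {g :: 'a \<Rightarrow> real. \<forall>c x. g (c *\<^sub>R x) = c * g x}"
    by (intro closed_Collect_all closed_Collect_eq continuous_intros continuous_on_product_coordinates)
  ultimately show ?thesis
    by (simp add: closed_Int)
qed

lemma compact_bounded_linear_restr_vimage:
  assumes "compact K"
  shows "compact {g. linear g \<and> (\<forall>x. \<bar>g x\<bar> \<le> M * norm x) \<and> restr S g \<in> K}"
proof -
  have eq: "{g. linear g \<and> (\<forall>x. \<bar>g x\<bar> \<le> M * norm x) \<and> restr S g \<in> K} =
      Pi\<^sub>E UNIV (\<lambda>x. cball 0 (M * norm x)) \<inter> ({g. linear g} \<inter> restr S -` K)"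
    by (auto simp: PiE_UNIV_domain)
  have "closed (restr S -` K)"
    by (rule closed_vimage[OF compact_imp_closed_fun[OF assms] continuous_on_restr])
  then have "closed ({g. linear g} \<inter> restr S -` K)"
    by (rule closed_Int[OF closed_linear_fun])
  then show ?thesis
    unfolding eq by (rule compact_Int_closed[OF compact_PiE_cball_fun])
qed

lemma lift_mackey_sets:
  assumes S: "subspace S" and Y: "Y \<subseteq> dual_sp S" and K: "K \<in> mackey_sets Y" and M: "M \<ge> 0"
  shows "{g. linear g \<and> (\<forall>x. \<bar>g x\<bar> \<le> M * norm x) \<and> restr S g \<in> K} \<in> mackey_sets (dual_preimage S Y)"
    (is "?K \<in> _")
proof -
  have "?K \<subseteq> dual_preimage S Y"
    using K unfolding dual_preimage_def dual_sp_UNIV_iff mackey_sets_def by blast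
  moreover have "compact ?K"
    using K compact_bounded_linear_restr_vimage unfolding mackey_sets_def by blast
  moreover have "(\<lambda>x. a * f x + b * g x) \<in> ?K" if f: "f \<in> ?K" and g: "g \<in> ?K" and ab: "\<bar>a\<bar> + \<bar>b\<bar> \<le> 1"
    for f g and a b :: real
  proof -
    have "linear (\<lambda>x. a * f x + b * g x)"
      using f g by (auto simp: linear_iff algebra_simps)
    moreover have "\<bar>a * f x + b * g x\<bar> \<le> M * norm x" for x
    proof -
      have "\<bar>a * f x + b * g x\<bar> \<le> \<bar>a\<bar> * (M * norm x) + \<bar>b\<bar> * (M * norm x)"
        using f g abs_triangle_ineq[of "a * f x" "b * g x"]
          mult_left_mono[of "\<bar>f x\<bar>" "M * norm x" "\<bar>a\<bar>"] mult_left_mono[of "\<bar>g x\<bar>" "M * norm x" "\<bar>b\<bar>"]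
        by (auto simp: abs_mult)
      also have "\<dots> \<le> M * norm x"
        using mult_right_mono[OF ab, of "M * norm x"] M by (simp add: distrib_right [symmetric])
      finally show ?thesis .
    qed
    moreover have "restr S (\<lambda>x. a * f x + b * g x) = (\<lambda>x. a * restr S f x + b * restr S g x)"
      by (auto simp: restr_def)
    then have "restr S (\<lambda>x. a * f x + b * g x) \<in> K"
      using K f g ab unfolding mackey_sets_def by auto
    ultimately show ?thesis
      by blast
  qed
  ultimately show ?thesis
    unfolding mackey_sets_def by blast
qed

lemma mackey_limit_restrict:
  fixes S :: "'a::banach set"
  assumes S: "subspace S" "closed S" and Y: "Y \<subseteq> dual_sp S"
    and FS: "eventually (\<lambda>x. x \<in> S) F" and z: "z \<in> S" "mackey_limit (dual_preimage S Y) F z"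
  shows "mackey_limit Y F z"
  unfolding mackey_limit_def
proof (intro ballI allI impI)
  fix K and e :: real
  assume K: "K \<in> mackey_sets Y" and e: "e > 0"
  then have "K \<subseteq> dual_sp S" "compact K"
    using Y unfolding mackey_sets_def by auto
  then obtain M where M: "M \<ge> 0" "\<forall>f\<in>K. dnorm S f \<le> M"
    using compact_dual_sp_dnorm_bounded[OF S] by blast
  \<comment> \<open>\<open>K\<close> is norm bounded, so by Hahn--Banach it lies in the restriction of the
    weak-star compact set \<open>K'\<close>\<close>
  define K' where "K' = {g. linear g \<and> (\<forall>x. \<bar>g x\<bar> \<le> M * norm x) \<and> restr S g \<in> K}"
  have ev: "eventually (\<lambda>x. \<forall>g\<in>K'. \<bar>g x - g z\<bar> \<le> e) F"
    using z(2) e lift_mackey_sets[OF S(1) Y K M(1)] unfolding mackey_limit_def K'_def by blast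
  have lift: "\<exists>g\<in>K'. restr S g = f" if f: "f \<in> K" for f
  proof -
    obtain g where g: "g \<in> dual_sp UNIV" "dnorm UNIV g \<le> M" "restr S g = f"
      using dual_sp_extension[OF S(1) _ bspec[OF M(2) f]] f \<open>K \<subseteq> dual_sp S\<close> by blast
    have "\<bar>g x\<bar> \<le> M * norm x" for x
      using dual_sp_abs_le_dnorm[OF g(1) subspace_UNIV] mult_right_mono[OF g(2) norm_ge_zero]
      by (meson UNIV_I order_trans)
    then show ?thesis
      using g f unfolding K'_def dual_sp_UNIV_iff by blast
  qed
  from ev FS show "eventually (\<lambda>x. \<forall>f\<in>K. \<bar>f x - f z\<bar> \<le> e) F"
  proof eventually_elim
    case (elim x)
    show ?case
    proof
      fix f
      assume "f \<in> K"
      then obtain g where "g \<in> K'" "restr S g = f"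
        using lift by blast
      then show "\<bar>f x - f z\<bar> \<le> e"
        using elim z(1) by (auto simp: restr_def)
    qed
  qed
qed

lemma fully_Mackey_complete_closed_subspace:
  fixes S :: "'a::banach set"
  assumes S: "subspace S" "closed S" and Mackey: "fully_Mackey_complete (UNIV :: 'a set)"
  shows "fully_Mackey_complete S"
  unfolding fully_Mackey_complete_def mackey_complete_iff
proof (intro allI impI)
  fix Y and F :: "'a filter"
  assume Y: "dual_subspace S Y \<and> norming S Y \<and> norm_closed S Y"
    and F: "F \<noteq> bot \<and> eventually (\<lambda>x. x \<in> S) F \<and> mackey_Cauchy Y F"
  from Y have Y_sub: "dual_subspace S Y"
    by blast
  have "mackey_complete UNIV (dual_preimage S Y)"
    using Mackey norming_closed_dual_preimage[OF S Y] unfolding fully_Mackey_complete_def by blast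
  moreover have "mackey_Cauchy (dual_preimage S Y) F"
    using mackey_Cauchy_dual_preimage F by blast
  ultimately obtain z where "mackey_limit (dual_preimage S Y) F z"
    using F unfolding mackey_complete_iff by auto
  moreover from this have "z \<in> S"
    using mackey_limit_in_subspace[OF S Y_sub] F by blast
  ultimately show "\<exists>z\<in>S. mackey_limit Y F z"
    using mackey_limit_restrict[OF S] Y_sub F unfolding dual_subspace_def by blast
qed

theorem corollary3p6:
  fixes S :: "'a::banach set"
  assumes "subspace S" and "closed S"
  shows "(fully_Mazur (UNIV :: 'a set) \<longrightarrow> fully_Mazur S) \<and>
         (fully_Mackey_complete (UNIV :: 'a set) \<longrightarrow> fully_Mackey_complete S)"
  using fully_Mazur_closed_subspace[OF assms] fully_Mackey_complete_closed_subspace[OF assms] by blast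

end
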